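(* For the Proximal Bundle Method, suppose iteration $k$ is a descent step and iterations $k+1,\dots,k+T$ are all null steps, and let $G=\sup\{\|g_{t+1}\|: k\le t\le k+T\}>0$. For $k<t\le k+T+1$ define the model proximal gap $\widetilde\Delta_t:=f(x_{k+1})-\left(f_t(z_{t+1})+\frac{\rho_t}{2}\|z_{t+1}-x_{k+1}\|^2\right)$. Then for every $k<t\le k+T$, $$\widetilde\Delta_{t+1}\le\widetilde\Delta_t-\frac{(1-\beta)^2\rho_{k+1}\widetilde\Delta_t^2}{8G^2}.$$
   Context: Throughout, $f:\mathbb{R}^d\to\mathbb{R}$ is a proper closed convex function attaining its minimum $f^*=\inf f$ on the nonempty set $X^*=\{x: f(x)=f^*\}$; $\partial f(x)$ is the convex subdifferential. A subgradient oracle returns, for any $x$, the value $f(x)$ and some $g(x)\in\partial f(x)$. Proximal Bundle Method: fix $\beta\in(0,1)$, $x_0=z_0\in\mathbb{R}^d$, $g_0=g(x_0)$, and the initial model $f_0(x)=f(x_0)+\langle g_0,x-x_0\rangle$. At iteration $k\ge0$, given a convex model $f_k:\mathbb{R}^d\to\mathbb{R}$ and stepsize $\rho_k>0$, compute $z_{k+1}=\operatorname{argmin}_z f_k(z)+\frac{\rho_k}{2}\|z-x_k\|^2$. If $\beta(f(x_k)-f_k(z_{k+1}))\le f(x_k)-f(z_{k+1})$, iteration $k$ is a descent step and $x_{k+1}=z_{k+1}$; otherwise it is a null step and $x_{k+1}=x_k$. Then a new convex model $f_{k+1}$ and stepsize $\rho_{k+1}$ are chosen satisfying, with $g_{k+1}=g(z_{k+1})$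 and $s_{k+1}=\rho_k(x_k-z_{k+1})$: (1) $f_{k+1}(x)\le f(x)$ for all $x$; (2) $f_{k+1}(x)\ge f(z_{k+1})+\langle g_{k+1},x-z_{k+1}\rangle$ for all $x$; (3) if iteration $k$ was a null step, $f_{k+1}(x)\ge f_k(z_{k+1})+\langle s_{k+1},x-z_{k+1}\rangle$ for all $x$; (4) if iteration $k$ was a null step, $\rho_{k+1}\ge\rho_k$. *)

theory Defs
  imports "HOL-Analysis.Analysis"
begin

text \<open>Setting: f convex, real-valued on a Euclidean space (hence proper and closed),
attaining its minimum; g is a subgradient oracle.\<close>

definition is_subgradient :: "('a::euclidean_space \<Rightarrow> real) \<Rightarrow> 'a \<Rightarrow> 'a \<Rightarrow> bool" where
  "is_subgradient f x v \<longleftrightarrow> (\<forall>y. f x + inner v (y - x) \<le> f y)"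

definition pbm_descent ::
  "('a::euclidean_space \<Rightarrow> real) \<Rightarrow> real \<Rightarrow> (nat \<Rightarrow> 'a) \<Rightarrow> (nat \<Rightarrow> 'a)
     \<Rightarrow> (nat \<Rightarrow> 'a \<Rightarrow> real) \<Rightarrow> nat \<Rightarrow> bool" where
  "pbm_descent f \<beta> x z F k \<longleftrightarrow>
     \<beta> * (f (x k) - F k (z (Suc k))) \<le> f (x k) - f (z (Suc k))"

text \<open>A run of the Proximal Bundle Method: iterates x, proximal points z, models F,
stepsizes rho, with subgradients g (z (k+1)) = g_{k+1}.\<close>

definition pbm_run ::
  "('a::euclidean_space \<Rightarrow> real) \<Rightarrow> ('a \<Rightarrow> 'a) \<Rightarrow> real \<Rightarrow> (nat \<Rightarrow> 'a) \<Rightarrow> (nat \<Rightarrow> 'a)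
     \<Rightarrow> (nat \<Rightarrow> 'a \<Rightarrow> real) \<Rightarrow> (nat \<Rightarrow> real) \<Rightarrow> bool" where
  "pbm_run f g \<beta> x z F \<rho> \<longleftrightarrow>
     x 0 = z 0 \<and>
     F 0 = (\<lambda>y. f (x 0) + inner (g (x 0)) (y - x 0)) \<and>
     (\<forall>k. convex_on UNIV (F k)) \<and>
     (\<forall>k. \<rho> k > 0) \<and>
     (\<forall>k y. F k (z (Suc k)) + \<rho> k / 2 * (norm (z (Suc k) - x k))\<^sup>2
              \<le> F k y + \<rho> k / 2 * (norm (y - x k))\<^sup>2) \<and>
     (\<forall>k. x (Suc k) = (if pbm_descent f \<beta> x z F k then z (Suc k) else x k)) \<and>
     (\<forall>k y. F (Suc k) y \<le> f y) \<and>
     (\<forall>k y. F (Suc k) y \<ge> f (z (Suc k)) + inner (g (z (Suc k))) (y - z (Suc k))) \<and>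
     (\<forall>k y. \<not> pbm_descent f \<beta> x z F k \<longrightarrow>
        F (Suc k) y \<ge> F k (z (Suc k)) + inner (\<rho> k *\<^sub>R (x k - z (Suc k))) (y - z (Suc k))) \<and>
     (\<forall>k. \<not> pbm_descent f \<beta> x z F k \<longrightarrow> \<rho> (Suc k) \<ge> \<rho> k)"

end

theory Submission
  imports Defs
begin

(*
  All steps after k are null steps, so the proximal centre stays at x (k+1) and the stepsizes
  do not decrease.  The next model dominates both the new subgradient cut and the aggregate
  linearization with slope s (t+1); a convex combination with weight lam of these two minorants
  raises the proximal value by lam (f (z (t+1)) - F t (z (t+1))) >= lam (1 - beta) Delta t
  (the null-step test) at the cost of a term of order lam^2 G^2 / rho (k+1), and the optimal
  lam gives the decrease.  This lam is at most 1 because Delta t <= G^2 / (2 rho (k+1)): at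
  t = k+1 this holds since x (k+1) = z (k+1), and it persists because Delta decreases.
  Convexity of f and the subgradient oracle enter only through the model conditions (1)-(3).
*)

lemma inner_add_half_square_lower_bound:
  fixes v h :: "'a::real_inner"
  assumes "r > 0"
  shows "- ((norm v)\<^sup>2 / (2 * r)) \<le> inner v h + r / 2 * (norm h)\<^sup>2"
proof -
  have "0 \<le> r / 2 * (norm (h + v /\<^sub>R r))\<^sup>2" using assms by simp
  also have "\<dots> = inner v h + r / 2 * (norm h)\<^sup>2 + (norm v)\<^sup>2 / (2 * r)"
    using assms by (simp add: power2_norm_eq_inner inner_add_left inner_add_right
        inner_commute field_simps)
  finally show ?thesis by linarith
qed

lemma norm_add_power2_le:
  fixes a b :: "'a::real_normed_vector"
  shows "(norm (a + b))\<^sup>2 \<le> 2 * (norm a)\<^sup>2 + 2 * (norm b)\<^sup>2"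
proof -
  have "(norm (a + b))\<^sup>2 \<le> (norm a + norm b)\<^sup>2"
    by (simp add: norm_triangle_ineq power_mono)
  also have "\<dots> \<le> 2 * (norm a)\<^sup>2 + 2 * (norm b)\<^sup>2"
    using zero_le_power2[of "norm a - norm b"] unfolding power2_sum power2_diff by linarith
  finally show ?thesis .
qed

lemma two_cut_prox_lower_bound:
  fixes x z z' g :: "'a::real_inner" and Fa Fb :: "'a \<Rightarrow> real"
  assumes cut: "fz + inner g (z' - z) \<le> Fb z'"
    and agg: "Fa z + inner (r *\<^sub>R (x - z)) (z' - z) \<le> Fb z'"
    and r: "0 < r" "r \<le> r'" and lam: "0 \<le> lam" "lam \<le> 1"
  shows "Fa z + r / 2 * (norm (z - x))\<^sup>2 + lam * (fz - Fa z)
           - lam\<^sup>2 * (norm (g + r *\<^sub>R (z - x)))\<^sup>2 / (2 * r)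
         \<le> Fb z' + r' / 2 * (norm (z' - x))\<^sup>2"
proof -
  define d h where "d = z - x" and "h = z' - z"
  define v where "v = g + r *\<^sub>R d"
  have comb: "(1 - lam) * (Fa z - r * inner d h) + lam * (fz + inner g h) \<le> Fb z'"
  proof -
    have "inner (r *\<^sub>R (x - z)) (z' - z) = - r * inner d h"
      by (simp add: d_def h_def inner_diff_left algebra_simps)
    hence "(1 - lam) * (Fa z - r * inner d h) \<le> (1 - lam) * Fb z'"
      using agg lam by (intro mult_left_mono) auto
    moreover have "lam * (fz + inner g h) \<le> lam * Fb z'"
      using cut lam h_def by (intro mult_left_mono) auto
    ultimately show ?thesis by (simp add: algebra_simps)
  qed
  have sq: "(norm (z' - x))\<^sup>2 = (norm h)\<^sup>2 + 2 * inner d h + (norm d)\<^sup>2"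
    unfolding d_def h_def power2_norm_eq_inner
    by (simp add: inner_diff_left inner_diff_right inner_commute)
  have "- ((norm (lam *\<^sub>R v))\<^sup>2 / (2 * r)) \<le> inner (lam *\<^sub>R v) h + r / 2 * (norm h)\<^sup>2"
    by (rule inner_add_half_square_lower_bound) (use r in simp)
  moreover have "(norm (lam *\<^sub>R v))\<^sup>2 = lam\<^sup>2 * (norm v)\<^sup>2"
    using lam by (simp add: power_mult_distrib)
  moreover have "inner (lam *\<^sub>R v) h = lam * inner g h + lam * r * inner d h"
    by (simp add: v_def d_def inner_add_left algebra_simps)
  ultimately have quad:
    "- (lam\<^sup>2 * (norm v)\<^sup>2 / (2 * r)) \<le> lam * inner g h + lam * r * inner d h + r / 2 * (norm h)\<^sup>2"
    by simp
  have "r / 2 * (norm (z' - x))\<^sup>2 \<le> r' / 2 * (norm (z' - x))\<^sup>2"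
    using r by (intro mult_right_mono) auto
  moreover have "r / 2 * (norm (z' - x))\<^sup>2 = r / 2 * (norm h)\<^sup>2 + r * inner d h + r / 2 * (norm d)\<^sup>2"
    by (simp add: sq algebra_simps)
  ultimately show ?thesis
    using comb quad unfolding d_def[symmetric] v_def[symmetric] by (simp add: field_simps)
qed

lemma bound_by_optimal_weight:
  fixes Da Db K C G r :: real
  assumes family: "\<And>lam. 0 \<le> lam \<Longrightarrow> lam \<le> 1 \<Longrightarrow> Db \<le> Da - lam * K + lam\<^sup>2 * C"
    and K: "0 \<le> K" "K \<le> G\<^sup>2 / (2 * r)" and C: "C \<le> 2 * G\<^sup>2 / r"
    and r: "0 < r" and G: "0 < G"
  shows "Db \<le> Da - r * K\<^sup>2 / (8 * G\<^sup>2)"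
proof -
  define lam where "lam = r * K / (4 * G\<^sup>2)"
  have "r * K \<le> G\<^sup>2 / 2" using K(2) r by (simp add: field_simps)
  hence "r * K \<le> 4 * G\<^sup>2" using zero_le_power2[of G] by linarith
  hence lam: "0 \<le> lam" "lam \<le> 1"
    using K r G by (auto simp: lam_def)
  have "Db \<le> Da - lam * K + lam\<^sup>2 * (2 * G\<^sup>2 / r)"
    using family[OF lam] mult_left_mono[OF C zero_le_power2[of lam]] by linarith
  also have "\<dots> = Da - r * K\<^sup>2 / (8 * G\<^sup>2)"
    using r G by (simp add: lam_def power2_eq_square field_simps)
  finally show ?thesis .
qed

lemma null_step_gap_decrease:
  fixes x z z' g :: "'a::real_inner" and Fa Fb :: "'a \<Rightarrow> real"
  assumes prox: "Fa z + rb / 2 * (norm (z - x))\<^sup>2 \<le> Fa x"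
    and null: "\<not> \<beta> * (fx - Fa z) \<le> fx - fz"
    and Fa_le: "Fa x \<le> fx" and Fb_le: "Fb x \<le> fx"
    and cut: "\<And>y. fz + inner g (y - z) \<le> Fb y"
    and agg: "\<And>y. Fa z + inner (rb *\<^sub>R (x - z)) (y - z) \<le> Fb y"
    and g_le: "norm g \<le> G" and G: "0 < G"
    and r: "0 < ra" "ra \<le> rb" "rb \<le> rc" and \<beta>: "0 < \<beta>" "\<beta> < 1"
    and Da_le: "Da \<le> G\<^sup>2 / (2 * ra)"
    and Da: "Da = fx - (Fa z + rb / 2 * (norm (z - x))\<^sup>2)"
    and Db: "Db = fx - (Fb z' + rc / 2 * (norm (z' - x))\<^sup>2)"
  shows "Db \<le> Da - (1 - \<beta>)\<^sup>2 * ra * Da\<^sup>2 / (8 * G\<^sup>2)"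
proof -
  define C where "C = (norm (g + rb *\<^sub>R (z - x)))\<^sup>2 / (2 * rb)"
  have "0 < rb" using r by linarith
  have Da_nonneg: "0 \<le> Da" using prox Fa_le Da by simp
  have gap: "(1 - \<beta>) * Da \<le> fz - Fa z"
  proof -
    have "(1 - \<beta>) * Da \<le> (1 - \<beta>) * (fx - Fa z)"
      using Da \<beta> \<open>0 < rb\<close> by (intro mult_left_mono) auto
    thus ?thesis using null by (simp add: algebra_simps)
  qed
  have step_le: "rb * (norm (z - x))\<^sup>2 \<le> 2 * Da"
  proof -
    have "inner (rb *\<^sub>R (x - z)) (x - z) = rb * (norm (z - x))\<^sup>2"
      by (simp add: dot_square_norm norm_minus_commute)
    thus ?thesis using agg[of x] Fb_le Da by linarith
  qed
  have "C \<le> (2 * (norm g)\<^sup>2 + 2 * (rb * norm (z - x))\<^sup>2) / (2 * rb)"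
    unfolding C_def using norm_add_power2_le[of g "rb *\<^sub>R (z - x)"] \<open>0 < rb\<close>
    by (intro divide_right_mono) auto
  also have "\<dots> = (norm g)\<^sup>2 / rb + rb * (norm (z - x))\<^sup>2"
    using \<open>0 < rb\<close> by (simp add: field_simps power2_eq_square)
  also have "\<dots> \<le> G\<^sup>2 / ra + 2 * Da"
  proof -
    have "(norm g)\<^sup>2 / rb \<le> G\<^sup>2 / ra"
      by (rule frac_le) (use r g_le in \<open>auto intro: power_mono\<close>)
    thus ?thesis using step_le by linarith
  qed
  also have "\<dots> \<le> 2 * G\<^sup>2 / ra" using Da_le r by (simp add: field_simps)
  finally have C_le: "C \<le> 2 * G\<^sup>2 / ra" .
  have family: "Db \<le> Da - lam * ((1 - \<beta>) * Da) + lam\<^sup>2 * C" if "0 \<le> lam" "lam \<le> 1" for lam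
  proof -
    have "lam * ((1 - \<beta>) * Da) \<le> lam * (fz - Fa z)" using mult_left_mono[OF gap that(1)] .
    thus ?thesis
      using two_cut_prox_lower_bound[where Fa = Fa and Fb = Fb and z' = z', OF cut agg \<open>0 < rb\<close> r(3) that]
        Da Db by (simp add: C_def)
  qed
  have "(1 - \<beta>) * Da \<le> G\<^sup>2 / (2 * ra)"
    using mult_left_le_one_le[OF Da_nonneg, of "1 - \<beta>"] Da_le \<beta> by linarith
  hence "Db \<le> Da - ra * ((1 - \<beta>) * Da)\<^sup>2 / (8 * G\<^sup>2)"
    using bound_by_optimal_weight[OF family _ _ C_le r(1) G] Da_nonneg \<beta> by simp
  thus ?thesis by (simp add: power_mult_distrib ac_simps)
qed

locale pbm_null_steps =
  fixes f :: "'a::euclidean_space \<Rightarrow> real" and g :: "'a \<Rightarrow> 'a"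
    and \<beta> :: real and x z :: "nat \<Rightarrow> 'a" and F :: "nat \<Rightarrow> 'a \<Rightarrow> real"
    and \<rho> :: "nat \<Rightarrow> real" and k T :: nat and G :: real
    and \<Delta> :: "nat \<Rightarrow> real"
  assumes beta: "0 < \<beta>" "\<beta> < 1"
    and run: "pbm_run f g \<beta> x z F \<rho>"
    and desc: "pbm_descent f \<beta> x z F k"
    and nulls: "\<And>t. k < t \<Longrightarrow> t \<le> k + T \<Longrightarrow> \<not> pbm_descent f \<beta> x z F t"
    and G_def: "G = (SUP t\<in>{k..k+T}. norm (g (z (Suc t))))"
    and G_pos: "G > 0"
    and Delta_def: "\<And>t. \<Delta> t = f (x (Suc k)) -
          (F t (z (Suc t)) + \<rho> t / 2 * (norm (z (Suc t) - x (Suc k)))\<^sup>2)"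
begin

lemma stepsize_pos: "0 < \<rho> t"
  and prox_point_min: "F t (z (Suc t)) + \<rho> t / 2 * (norm (z (Suc t) - x t))\<^sup>2
                         \<le> F t y + \<rho> t / 2 * (norm (y - x t))\<^sup>2"
  and next_center: "x (Suc t) = (if pbm_descent f \<beta> x z F t then z (Suc t) else x t)"
  and model_le: "F (Suc t) y \<le> f y"
  and model_ge_cut: "f (z (Suc t)) + inner (g (z (Suc t))) (y - z (Suc t)) \<le> F (Suc t) y"
  and model_ge_aggregate: "\<not> pbm_descent f \<beta> x z F t \<Longrightarrow>
      F t (z (Suc t)) + inner (\<rho> t *\<^sub>R (x t - z (Suc t))) (y - z (Suc t)) \<le> F (Suc t) y"
  and stepsize_mono: "\<not> pbm_descent f \<beta> x z F t \<Longrightarrow> \<rho> t \<le> \<rho> (Suc t)"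
  using run unfolding pbm_run_def by auto

lemma center_constant:
  assumes "Suc k \<le> t" "t \<le> k + T"
  shows "x t = x (Suc k)"
  using assms
proof (induction t rule: dec_induct)
  case (step n)
  thus ?case using next_center[of n] nulls[of n] by simp
qed simp

lemma stepsize_ge_first:
  assumes "Suc k \<le> t" "t \<le> k + T"
  shows "\<rho> (Suc k) \<le> \<rho> t"
  using assms
proof (induction t rule: dec_induct)
  case (step n)
  thus ?case using stepsize_mono[of n] nulls[of n] by simp
qed simp

lemma subgradient_norm_le: "k \<le> t \<Longrightarrow> t \<le> k + T \<Longrightarrow> norm (g (z (Suc t))) \<le> G"
  unfolding G_def by (rule cSUP_upper) auto

lemma first_gap_le: "\<Delta> (Suc k) \<le> G\<^sup>2 / (2 * \<rho> (Suc k))"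
proof -
  define c h where "c = x (Suc k)" and "h = z (Suc (Suc k)) - x (Suc k)"
  have c: "c = z (Suc k)" using next_center[of k] desc c_def by simp
  have "- ((norm (g c))\<^sup>2 / (2 * \<rho> (Suc k))) \<le> inner (g c) h + \<rho> (Suc k) / 2 * (norm h)\<^sup>2"
    by (rule inner_add_half_square_lower_bound) (rule stepsize_pos)
  moreover have "(norm (g c))\<^sup>2 / (2 * \<rho> (Suc k)) \<le> G\<^sup>2 / (2 * \<rho> (Suc k))"
    using subgradient_norm_le[of k] c stepsize_pos[of "Suc k"]
    by (intro divide_right_mono power_mono) auto
  ultimately show ?thesis
    using model_ge_cut[of k "z (Suc (Suc k))"] Delta_def[of "Suc k"] c c_def h_def by simp
qed

lemma gap_decrease:
  assumes t: "k < t" "t \<le> k + T" and gap_le: "\<Delta> t \<le> G\<^sup>2 / (2 * \<rho> (Suc k))"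
  shows "\<Delta> (Suc t) \<le> \<Delta> t - (1 - \<beta>)\<^sup>2 * \<rho> (Suc k) * (\<Delta> t)\<^sup>2 / (8 * G\<^sup>2)"
proof -
  have center: "x t = x (Suc k)" using center_constant[of t] t by simp
  have null: "\<not> pbm_descent f \<beta> x z F t" using nulls t .
  obtain t' where t': "t = Suc t'" using t by (cases t) auto
  show ?thesis
  proof (rule null_step_gap_decrease[where x = "x (Suc k)" and z = "z (Suc t)"
        and z' = "z (Suc (Suc t))" and Fa = "F t" and Fb = "F (Suc t)" and g = "g (z (Suc t))"
        and fx = "f (x (Suc k))" and fz = "f (z (Suc t))" and rb = "\<rho> t" and rc = "\<rho> (Suc t)"])
    show "F t (z (Suc t)) + \<rho> t / 2 * (norm (z (Suc t) - x (Suc k)))\<^sup>2 \<le> F t (x (Suc k))"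
      using prox_point_min[of t "x t"] center by simp
    show "\<not> \<beta> * (f (x (Suc k)) - F t (z (Suc t))) \<le> f (x (Suc k)) - f (z (Suc t))"
      using null center unfolding pbm_descent_def by simp
    show "F t (x (Suc k)) \<le> f (x (Suc k))" using model_le[of t'] t' by simp
    show "F (Suc t) (x (Suc k)) \<le> f (x (Suc k))" by (rule model_le)
    show "f (z (Suc t)) + inner (g (z (Suc t))) (y - z (Suc t)) \<le> F (Suc t) y" for y
      by (rule model_ge_cut)
    show "F t (z (Suc t)) + inner (\<rho> t *\<^sub>R (x (Suc k) - z (Suc t))) (y - z (Suc t)) \<le> F (Suc t) y" for y
      using model_ge_aggregate[OF null] center by simp
    show "norm (g (z (Suc t))) \<le> G" using subgradient_norm_le[of t] t by simp
    show "\<rho> (Suc k) \<le> \<rho> t" using stepsize_ge_first[of t] t by simp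
    show "\<rho> t \<le> \<rho> (Suc t)" using stepsize_mono[OF null] .
    show "\<Delta> t = f (x (Suc k)) - (F t (z (Suc t)) + \<rho> t / 2 * (norm (z (Suc t) - x (Suc k)))\<^sup>2)"
      "\<Delta> (Suc t) = f (x (Suc k)) -
         (F (Suc t) (z (Suc (Suc t))) + \<rho> (Suc t) / 2 * (norm (z (Suc (Suc t)) - x (Suc k)))\<^sup>2)"
      by (rule Delta_def)+
  qed (fact G_pos stepsize_pos beta gap_le)+
qed

lemma gap_le_first_bound:
  assumes "Suc k \<le> t" "t \<le> k + T"
  shows "\<Delta> t \<le> G\<^sup>2 / (2 * \<rho> (Suc k))"
  using assms
proof (induction t rule: dec_induct)
  case base
  show ?case by (rule first_gap_le)
next
  case (step n)
  have "0 \<le> (1 - \<beta>)\<^sup>2 * \<rho> (Suc k) * (\<Delta> n)\<^sup>2 / (8 * G\<^sup>2)"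
    using stepsize_pos[of "Suc k"] by simp
  moreover have "\<Delta> (Suc n) \<le> \<Delta> n - (1 - \<beta>)\<^sup>2 * \<rho> (Suc k) * (\<Delta> n)\<^sup>2 / (8 * G\<^sup>2)"
    using step by (intro gap_decrease) auto
  ultimately show ?case using step by linarith
qed

end

theorem mainTheorem10:
  fixes f :: "'a::euclidean_space \<Rightarrow> real" and g :: "'a \<Rightarrow> 'a"
    and \<beta> :: real and x z :: "nat \<Rightarrow> 'a" and F :: "nat \<Rightarrow> 'a \<Rightarrow> real"
    and \<rho> :: "nat \<Rightarrow> real" and k T :: nat and G :: real
    and \<Delta> :: "nat \<Rightarrow> real"
  assumes fconv: "convex_on UNIV f"
    and fmin: "\<exists>xs. \<forall>y. f xs \<le> f y"
    and subgr: "\<And>y. is_subgradient f y (g y)"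
    and beta: "0 < \<beta>" "\<beta> < 1"
    and run: "pbm_run f g \<beta> x z F \<rho>"
    and desc: "pbm_descent f \<beta> x z F k"
    and nulls: "\<And>t. k < t \<Longrightarrow> t \<le> k + T \<Longrightarrow> \<not> pbm_descent f \<beta> x z F t"
    and G_def: "G = (SUP t\<in>{k..k+T}. norm (g (z (Suc t))))"
    and G_pos: "G > 0"
    and Delta_def: "\<And>t. \<Delta> t = f (x (Suc k)) -
          (F t (z (Suc t)) + \<rho> t / 2 * (norm (z (Suc t) - x (Suc k)))\<^sup>2)"
  shows "\<forall>t. k < t \<and> t \<le> k + T \<longrightarrow>
           \<Delta> (Suc t) \<le> \<Delta> t - (1 - \<beta>)\<^sup>2 * \<rho> (Suc k) * (\<Delta> t)\<^sup>2 / (8 * G\<^sup>2)"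
proof -
  interpret pbm_null_steps f g \<beta> x z F \<rho> k T G \<Delta>
    using beta run desc nulls G_def G_pos Delta_def by unfold_locales
  show ?thesis
    using gap_decrease gap_le_first_bound by (simp add: Suc_le_eq)
qed

end
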